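(* Given integers $1 \le k' < k$ and reals $\beta, \xi > 0$, there exist $C, T > 0$ such that the following holds for all sufficiently large $n$ and all $m \ge C n^{1 - 1/(k-1)}$: for all but at most $\beta^m \binom{n}{m}$ of the $m$-element sets $S \subseteq [n]$, there exists $X \subset S$ with $|X| \le \xi m$ such that $$\frac{1}{n} \sum_{x \in [n]} \mathrm{AP}_{k',k}(x, S \setminus X, [n])^2 \le T \mu_e^2,$$ where $\mu_e = n (m/n)^{k'}$.
   Context: $[n] = \{1, \ldots, n\}$. A $k$-term arithmetic progression (AP) is a set of the form $\{a, a+d, \ldots, a+(k-1)d\}$ of integers with $d \ge 1$. For $x \in [n]$, sets $S \subseteq D \subseteq [n]$ and integers $0 \le k' \le k$, $\mathrm{AP}_{k',k}(x, S, D)$ denotes the number of $k$-term APs contained in $D$ which contain $x$ and contain at least $k'$ elements of $S \setminus \{x\}$. *)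

theory Defs
  imports "HOL-Analysis.Analysis"
begin

definition intv :: "nat \<Rightarrow> int set" where
  "intv n = {1..int n}"

definition is_AP :: "nat \<Rightarrow> int set \<Rightarrow> bool" where
  "is_AP k P \<longleftrightarrow> (\<exists>a d. d \<ge> 1 \<and> P = {a + int i * d | i. i < k})"

definition AP_count :: "nat \<Rightarrow> nat \<Rightarrow> int \<Rightarrow> int set \<Rightarrow> int set \<Rightarrow> nat" where
  "AP_count k' k x S D =
     card {P. is_AP k P \<and> P \<subseteq> D \<and> x \<in> P \<and> card (P \<inter> (S - {x})) \<ge> k'}"

end

theory Submission
  imports Defs
begin

text \<open>
  The sum of AP_{k',k}(x, S)^2 over x counts pairs of k-term progressions through a common
  point x, each meeting S - {x} in at least k' points. Marking k' such points on each
  progression of a pair gives a set A \<union> A' of at most 2k' points of S, so the sum is at most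
  the number of edges inside S of a hypergraph H on [n] whose edges are these marked sets.
  With p = m/n, the expected number of edges of H inside a random m-set is O(n^3 p^(2k')) from
  disjoint markings plus O(n^2 p^k') from overlapping ones, hence O(n \<mu>^2) for
  \<mu> = n p^k' \<ge> 1; the lower bound on m guarantees \<mu> \<ge> 1.

  By the deletion method, if deleting any 2k'q points of S still leaves more than L edges,
  then S contains at least L^q lists of q pairwise disjoint edges, while an m-set contains on
  average at most (\<Sum>e. p^|e|)^q of them. Hence at most (n choose m) (O(n \<mu>^2) / L)^q sets
  are bad, which is at most \<beta>^m (n choose m) for L = T n \<mu>^2 with T large and q = m / a,
  where a is chosen so that 2k'q \<le> \<xi> m.
\<close>

section \<open>The deletion method\<close>

lemma binomial_diff_le_power:
  fixes n m u :: nat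
  assumes "u \<le> m" "m \<le> n"
  shows "real ((n - u) choose (m - u)) \<le> real (n choose m) * (real m / real n) ^ u"
  using assms(1)
proof (induction u)
  case 0
  then show ?case by simp
next
  case (Suc u)
  then have "u < m" by simp
  have step: "real (m - u) * real ((n - u) choose (m - u))
      = real (n - u) * real ((n - Suc u) choose (m - Suc u))"
  proof -
    have "(m - u) * ((n - u) choose (m - u)) = (n - u) * ((n - u - 1) choose (m - u - 1))"
      using times_binomial_minus1_eq[of "m - u" "n - u"] \<open>u < m\<close> by simp
    moreover have "n - u - 1 = n - Suc u" "m - u - 1 = m - Suc u" by auto
    ultimately show ?thesis by (metis of_nat_mult)
  qed
  have "real ((n - Suc u) choose (m - Suc u)) = real (m - u) / real (n - u) * real ((n - u) choose (m - u))"
    using step \<open>u < m\<close> assms(2) by (simp add: field_simps)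
  also have "\<dots> \<le> real m / real n * real ((n - u) choose (m - u))"
    using \<open>u < m\<close> assms(2)
    by (intro mult_right_mono) (simp_all add: divide_simps algebra_simps mult_right_mono)
  also have "\<dots> \<le> real m / real n * (real (n choose m) * (real m / real n) ^ u)"
    using Suc by (intro mult_left_mono) auto
  finally show ?case by (simp add: algebra_simps)
qed

lemma card_supersets_le:
  assumes "finite V" "U \<subseteq> V"
  shows "real (card {S. S \<subseteq> V \<and> card S = m \<and> U \<subseteq> S})
    \<le> real (card V choose m) * (real m / real (card V)) ^ card U"
proof (cases "card U \<le> m \<and> m \<le> card V")
  case False
  then have no_supersets: "{S. S \<subseteq> V \<and> card S = m \<and> U \<subseteq> S} = {}"
    using assms by (auto dest: card_mono[OF finite_subset] card_mono)
  show ?thesis by (simp only: no_supersets card.empty) simp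
next
  case True
  have "finite U" using assms finite_subset by blast
  have "bij_betw (\<lambda>S. S - U) {S. S \<subseteq> V \<and> card S = m \<and> U \<subseteq> S}
      {T. T \<subseteq> V - U \<and> card T = m - card U}"
  proof (rule bij_betw_byWitness[where f' = "\<lambda>T. T \<union> U"])
    have "card (T \<union> U) = m" if "T \<subseteq> V - U" "card T = m - card U" for T
      using that True \<open>finite U\<close> finite_subset[OF _ \<open>finite V\<close>] by (subst card_Un_disjoint) auto
    then show "(\<lambda>T. T \<union> U) ` {T. T \<subseteq> V - U \<and> card T = m - card U}
        \<subseteq> {S. S \<subseteq> V \<and> card S = m \<and> U \<subseteq> S}"
      using assms by auto
  qed (use assms \<open>finite U\<close> in \<open>auto simp: card_Diff_subset finite_subset\<close>)
  then have "card {S. S \<subseteq> V \<and> card S = m \<and> U \<subseteq> S} = (card V - card U) choose (m - card U)"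
    using assms \<open>finite U\<close> by (simp add: bij_betw_same_card n_subsets card_Diff_subset)
  then show ?thesis
    using binomial_diff_le_power[of "card U" m "card V"] True by simp
qed

lemma
  assumes "finite A" "\<And>a. a \<in> A \<Longrightarrow> finite (B a) \<and> card (B a) \<le> b"
  shows finite_Sigma_bounded: "finite (Sigma A B)"
    and card_Sigma_le: "card (Sigma A B) \<le> card A * b"
  using assms sum_bounded_above[of A "\<lambda>a. card (B a)" b] by auto

text \<open>Empty edges may repeat, so any edge avoiding the points already covered extends the list.\<close>

fun disjoint_list :: "('b \<Rightarrow> 'a set) \<Rightarrow> 'b list \<Rightarrow> bool" where
  "disjoint_list e [] \<longleftrightarrow> True"
| "disjoint_list e (i # l) \<longleftrightarrow> e i \<inter> \<Union>(e ` set l) = {} \<and> disjoint_list e l"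

lemma card_UN_disjoint_list:
  assumes "disjoint_list e l" "\<forall>i\<in>set l. finite (e i)"
  shows "card (\<Union>(e ` set l)) = (\<Sum>i\<leftarrow>l. card (e i))"
  using assms by (induction l) (auto simp: card_Un_disjoint)

lemma sum_prod_list_lists_length:
  fixes w :: "'b \<Rightarrow> 'c::comm_semiring_1"
  assumes "finite I"
  shows "(\<Sum>l\<in>{l. set l \<subseteq> I \<and> length l = q}. \<Prod>i\<leftarrow>l. w i) = (\<Sum>i\<in>I. w i) ^ q"
proof (induction q)
  case 0
  have "{l. set l \<subseteq> I \<and> length l = 0} = {[]}" by auto
  then show ?case by simp
next
  case (Suc q)
  have "(\<Sum>l\<in>{l. set l \<subseteq> I \<and> length l = Suc q}. \<Prod>i\<leftarrow>l. w i)
      = (\<Sum>(l, i)\<in>{l. set l \<subseteq> I \<and> length l = q} \<times> I. w i * (\<Prod>j\<leftarrow>l. w j))"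
    unfolding lists_length_Suc_eq by (subst sum.reindex[OF inj_split_Cons]) (simp add: split_def)
  also have "\<dots> = (\<Sum>i\<in>I. w i) ^ Suc q"
    by (simp add: sum.cartesian_product[symmetric] Suc flip: sum_distrib_right sum_distrib_left)
  finally show ?case .
qed

definition disjoint_lists_in ::
    "('b \<Rightarrow> 'a set) \<Rightarrow> 'b set \<Rightarrow> 'a set \<Rightarrow> nat \<Rightarrow> 'b list set" where
  "disjoint_lists_in e I S j =
     {l. set l \<subseteq> I \<and> length l = j \<and> disjoint_list e l \<and> \<Union>(e ` set l) \<subseteq> S}"

lemma finite_disjoint_lists_in: "finite I \<Longrightarrow> finite (disjoint_lists_in e I S j)"
  by (rule finite_subset[of _ "{l. set l \<subseteq> I \<and> length l = j}"])
    (auto simp: disjoint_lists_in_def finite_lists_length_eq)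

lemma disjoint_lists_in_Suc:
  "disjoint_lists_in e I S (Suc j) = (\<lambda>(l, i). i # l) `
     Sigma (disjoint_lists_in e I S j) (\<lambda>l. {i\<in>I. e i \<subseteq> S - \<Union>(e ` set l)})"
  by (force simp: disjoint_lists_in_def length_Suc_conv)

lemma card_disjoint_lists_in_ge:
  assumes "finite I" and edges: "\<forall>i\<in>I. finite (e i) \<and> card (e i) \<le> h" and "0 \<le> L"
    and robust: "\<forall>X\<subseteq>S. card X \<le> h * q \<longrightarrow> L < real (card {i\<in>I. e i \<subseteq> S - X})"
  shows "j \<le> q \<Longrightarrow> L ^ j \<le> real (card (disjoint_lists_in e I S j))"
proof (induction j)
  case 0
  have "disjoint_lists_in e I S 0 = {[]}" by (auto simp: disjoint_lists_in_def)
  then show ?case by simp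
next
  case (Suc j)
  let ?D = "disjoint_lists_in e I S j"
  have extend: "L \<le> real (card {i\<in>I. e i \<subseteq> S - \<Union>(e ` set l)})" if "l \<in> ?D" for l
  proof -
    have l: "set l \<subseteq> I" "length l = j" using that by (auto simp: disjoint_lists_in_def)
    have "card (S \<inter> \<Union>(e ` set l)) \<le> card (\<Union>(e ` set l))"
      using l edges by (intro card_mono) auto
    also have "\<dots> \<le> (\<Sum>i\<in>set l. card (e i))" by (rule card_UN_le) simp
    also have "\<dots> \<le> (\<Sum>i\<in>set l. h)" using l edges by (intro sum_mono) auto
    also have "\<dots> \<le> h * q" using l Suc.prems card_length[of l] by (simp add: mult.commute mult_le_mono)
    finally have "L < real (card {i\<in>I. e i \<subseteq> S - S \<inter> \<Union>(e ` set l)})" using robust by blast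
    then show ?thesis by (simp add: Diff_Int)
  qed
  have "L ^ j * L \<le> real (card ?D) * L"
    using Suc \<open>0 \<le> L\<close> by (intro mult_right_mono) auto
  also have "\<dots> \<le> (\<Sum>l\<in>?D. real (card {i\<in>I. e i \<subseteq> S - \<Union>(e ` set l)}))"
    using extend sum_mono[of ?D "\<lambda>_. L"] by (simp add: mult.commute)
  also have "\<dots> = real (card (disjoint_lists_in e I S (Suc j)))"
    using \<open>finite I\<close>
    by (simp add: disjoint_lists_in_Suc card_image inj_split_Cons
        card_SigmaI[OF finite_disjoint_lists_in] flip: of_nat_sum)
  finally show ?case by (simp add: mult.commute)
qed

lemma power_sum_list: "(x::'a::comm_monoid_mult) ^ (\<Sum>i\<leftarrow>l. f i) = (\<Prod>i\<leftarrow>l. x ^ f i)"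
  by (induction l) (simp_all add: power_add)

lemma sum_card_disjoint_lists_in_eq:
  assumes "finite V" "finite I"
  shows "(\<Sum>S\<in>{S. S \<subseteq> V \<and> card S = m}. card (disjoint_lists_in e I S q))
    = (\<Sum>l\<in>disjoint_lists_in e I V q. card {S. S \<subseteq> V \<and> card S = m \<and> \<Union>(e ` set l) \<subseteq> S})"
proof -
  let ?Sm = "{S. S \<subseteq> V \<and> card S = m}" and ?D = "disjoint_lists_in e I V q"
  have finite: "finite ?Sm" "finite ?D"
    using assms by (simp_all add: finite_disjoint_lists_in)
  have "disjoint_lists_in e I S q = {l\<in>?D. \<Union>(e ` set l) \<subseteq> S}" if "S \<in> ?Sm" for S
    using that by (auto simp: disjoint_lists_in_def)
  then have "(\<Sum>S\<in>?Sm. card (disjoint_lists_in e I S q))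
      = (\<Sum>S\<in>?Sm. card {l\<in>?D. \<Union>(e ` set l) \<subseteq> S})"
    by (intro sum.cong) simp_all
  also have "\<dots> = (\<Sum>l\<in>?D. card {S\<in>?Sm. \<Union>(e ` set l) \<subseteq> S})"
    using sum.swap_restrict[OF finite, of "\<lambda>_ _. 1::nat" "\<lambda>S l. \<Union>(e ` set l) \<subseteq> S"] by simp
  finally show ?thesis by simp
qed

lemma sum_card_disjoint_lists_in_le:
  assumes "finite V" "finite I" "\<forall>i\<in>I. e i \<subseteq> V"
  shows "(\<Sum>S\<in>{S. S \<subseteq> V \<and> card S = m}. real (card (disjoint_lists_in e I S q)))
    \<le> real (card V choose m) * (\<Sum>i\<in>I. (real m / real (card V)) ^ card (e i)) ^ q"
proof -
  define p where "p = real m / real (card V)"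
  have "(\<Sum>S\<in>{S. S \<subseteq> V \<and> card S = m}. real (card (disjoint_lists_in e I S q)))
      = (\<Sum>l\<in>disjoint_lists_in e I V q. real (card {S. S \<subseteq> V \<and> card S = m \<and> \<Union>(e ` set l) \<subseteq> S}))"
    using sum_card_disjoint_lists_in_eq[OF assms(1,2)] by (simp flip: of_nat_sum)
  also have "\<dots>
      \<le> (\<Sum>l\<in>disjoint_lists_in e I V q. real (card V choose m) * (\<Prod>i\<leftarrow>l. p ^ card (e i)))"
  proof (rule sum_mono)
    fix l assume "l \<in> disjoint_lists_in e I V q"
    then have l: "set l \<subseteq> I" "disjoint_list e l" by (auto simp: disjoint_lists_in_def)
    then have "\<forall>i\<in>set l. finite (e i)" using assms finite_subset by blast
    then have "p ^ card (\<Union>(e ` set l)) = (\<Prod>i\<leftarrow>l. p ^ card (e i))"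
      using l(2) by (simp add: card_UN_disjoint_list power_sum_list)
    then show "real (card {S. S \<subseteq> V \<and> card S = m \<and> \<Union>(e ` set l) \<subseteq> S})
        \<le> real (card V choose m) * (\<Prod>i\<leftarrow>l. p ^ card (e i))"
      using card_supersets_le[OF \<open>finite V\<close>, of "\<Union>(e ` set l)" m] l assms(3)
      by (auto simp: p_def)
  qed
  also have "\<dots>
      \<le> real (card V choose m) * (\<Sum>l\<in>{l. set l \<subseteq> I \<and> length l = q}. \<Prod>i\<leftarrow>l. p ^ card (e i))"
    unfolding sum_distrib_left[symmetric]
    by (intro mult_left_mono sum_mono2 finite_lists_length_eq \<open>finite I\<close> prod_list_nonneg)
      (auto simp: disjoint_lists_in_def p_def)
  also have "\<dots> = real (card V choose m) * (\<Sum>i\<in>I. p ^ card (e i)) ^ q"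
    by (simp add: sum_prod_list_lists_length[OF \<open>finite I\<close>])
  finally show ?thesis by (simp add: p_def)
qed

lemma deletion_method:
  assumes "finite V" "finite I" and edges: "\<forall>i\<in>I. e i \<subseteq> V \<and> card (e i) \<le> h" and "0 \<le> L"
  shows "real (card {S. S \<subseteq> V \<and> card S = m \<and>
            (\<forall>X\<subseteq>S. card X \<le> h * q \<longrightarrow> L < real (card {i\<in>I. e i \<subseteq> S - X}))}) * L ^ q
    \<le> real (card V choose m) * (\<Sum>i\<in>I. (real m / real (card V)) ^ card (e i)) ^ q"
    (is "real (card ?Bad) * _ \<le> _")
proof -
  let ?Sm = "{S. S \<subseteq> V \<and> card S = m}"
  have "\<forall>i\<in>I. finite (e i) \<and> card (e i) \<le> h"
    using edges finite_subset[OF _ \<open>finite V\<close>] by blast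
  then have "L ^ q \<le> real (card (disjoint_lists_in e I S q))" if "S \<in> ?Bad" for S
    using that card_disjoint_lists_in_ge[OF \<open>finite I\<close> _ \<open>0 \<le> L\<close>] by blast
  then have "real (card ?Bad) * L ^ q \<le> (\<Sum>S\<in>?Bad. real (card (disjoint_lists_in e I S q)))"
    using sum_mono[of ?Bad "\<lambda>_. L ^ q"] by simp
  also have "\<dots> \<le> (\<Sum>S\<in>?Sm. real (card (disjoint_lists_in e I S q)))"
    using \<open>finite V\<close> by (intro sum_mono2) auto
  also have "\<dots> \<le> real (card V choose m) * (\<Sum>i\<in>I. (real m / real (card V)) ^ card (e i)) ^ q"
    using edges by (intro sum_card_disjoint_lists_in_le[OF \<open>finite V\<close> \<open>finite I\<close>]) blast
  finally show ?thesis .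
qed

section \<open>Arithmetic progressions through given points\<close>

lemma finite_intv: "finite (intv n)"
  by (simp add: intv_def)

lemma card_intv: "card (intv n) = n"
  by (simp add: intv_def)

lemma is_AP_image:
  assumes "is_AP k P"
  obtains a d where "d \<ge> 1" "P = (\<lambda>i. a + int i * d) ` {..<k}"
  using assms unfolding is_AP_def by (auto simp: image_def)

lemma finite_AP: "is_AP k P \<Longrightarrow> finite P"
  by (metis is_AP_image finite_imageI finite_lessThan)

lemma card_AP_le: "is_AP k P \<Longrightarrow> card P \<le> k"
  by (metis is_AP_image card_image_le finite_lessThan card_lessThan)

definition APs_through :: "nat \<Rightarrow> nat \<Rightarrow> int \<Rightarrow> int set set" where
  "APs_through k n x = {P. is_AP k P \<and> P \<subseteq> intv n \<and> x \<in> P}"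

definition APs_through_both :: "nat \<Rightarrow> int \<Rightarrow> int \<Rightarrow> int set set" where
  "APs_through_both k x y = {P. is_AP k P \<and> x \<in> P \<and> y \<in> P}"

lemma APs_through_subset_image:
  assumes "k \<ge> 2"
  shows "APs_through k n x
    \<subseteq> (\<lambda>(j, d). (\<lambda>i. x + (int i - int j) * d) ` {..<k}) ` ({..<k} \<times> {1..int n})"
proof
  fix P assume "P \<in> APs_through k n x"
  then have "is_AP k P" "P \<subseteq> intv n" "x \<in> P" by (auto simp: APs_through_def)
  then obtain a d where d: "d \<ge> 1" and P: "P = (\<lambda>i. a + int i * d) ` {..<k}"
    by (auto elim: is_AP_image)
  obtain j where j: "j < k" "x = a + int j * d" using \<open>x \<in> P\<close> P by auto
  have "a \<in> P" "a + d \<in> P" using P assms by (auto intro: image_eqI[where x=0] image_eqI[where x=1])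
  then have "1 \<le> a" "a + d \<le> int n" using \<open>P \<subseteq> intv n\<close> by (auto simp: intv_def subset_iff)
  then have "d \<le> int n" by simp
  moreover have "P = (\<lambda>i. x + (int i - int j) * d) ` {..<k}"
    using P j by (simp add: algebra_simps)
  ultimately show "P \<in> (\<lambda>(j, d). (\<lambda>i. x + (int i - int j) * d) ` {..<k}) ` ({..<k} \<times> {1..int n})"
    using j d by force
qed

lemma
  assumes "k \<ge> 2"
  shows finite_APs_through: "finite (APs_through k n x)"
    and card_APs_through_le: "card (APs_through k n x) \<le> k * n"
proof -
  have parameters: "finite ({..<k} \<times> {1..int n})" by simp
  then show "finite (APs_through k n x)"
    by (rule finite_surj[OF _ APs_through_subset_image[OF assms]])
  show "card (APs_through k n x) \<le> k * n"
    using surj_card_le[OF parameters APs_through_subset_image[OF assms]]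
    by (simp add: card_cartesian_product)
qed

lemma APs_through_both_subset_image:
  assumes "x \<noteq> y"
  shows "APs_through_both k x y
    \<subseteq> (\<lambda>(j, j'). (\<lambda>i. x + (int i - int j) * ((y - x) div (int j' - int j))) ` {..<k})
        ` ({..<k} \<times> {..<k})"
proof
  fix P assume "P \<in> APs_through_both k x y"
  then have "is_AP k P" "x \<in> P" "y \<in> P" by (auto simp: APs_through_both_def)
  then obtain a d where d: "d \<ge> 1" and P: "P = (\<lambda>i. a + int i * d) ` {..<k}"
    by (auto elim: is_AP_image)
  obtain j where j: "j < k" "x = a + int j * d" using \<open>x \<in> P\<close> P by auto
  obtain j' where j': "j' < k" "y = a + int j' * d" using \<open>y \<in> P\<close> P by auto
  have "y - x = (int j' - int j) * d" "int j' - int j \<noteq> 0"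
    using j j' assms by (auto simp: algebra_simps)
  then have "(y - x) div (int j' - int j) = d" by simp
  moreover have "P = (\<lambda>i. x + (int i - int j) * d) ` {..<k}"
    using P j by (simp add: algebra_simps)
  ultimately show "P \<in> (\<lambda>(j, j'). (\<lambda>i. x + (int i - int j) * ((y - x) div (int j' - int j))) ` {..<k})
      ` ({..<k} \<times> {..<k})"
    using j j' by force
qed

lemma
  assumes "x \<noteq> y"
  shows finite_APs_through_both: "finite (APs_through_both k x y)"
    and card_APs_through_both_le: "card (APs_through_both k x y) \<le> k * k"
proof -
  have parameters: "finite ({..<k} \<times> {..<k})" by simp
  then show "finite (APs_through_both k x y)"
    by (rule finite_surj[OF _ APs_through_both_subset_image[OF assms]])
  show "card (APs_through_both k x y) \<le> k * k"
    using surj_card_le[OF parameters APs_through_both_subset_image[OF assms]]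
    by (simp add: card_cartesian_product)
qed

section \<open>Pairs of marked progressions\<close>

definition marked_APs :: "nat \<Rightarrow> nat \<Rightarrow> nat \<Rightarrow> int \<Rightarrow> (int set \<times> int set) set" where
  "marked_APs k k' n x = Sigma (APs_through k n x) (\<lambda>P. {A. A \<subseteq> P - {x} \<and> card A = k'})"

definition AP_pairs ::
    "nat \<Rightarrow> nat \<Rightarrow> nat \<Rightarrow> (int \<times> (int set \<times> int set) \<times> (int set \<times> int set)) set" where
  "AP_pairs k k' n = Sigma (intv n) (\<lambda>x. marked_APs k k' n x \<times> marked_APs k k' n x)"

definition marks :: "int \<times> (int set \<times> int set) \<times> (int set \<times> int set) \<Rightarrow> int set" where
  "marks = (\<lambda>(x, (P, A), (P', A')). A \<union> A')"

lemma
  assumes "is_AP k P"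
  shows finite_Pow_AP: "finite (Pow P)" and card_Pow_AP_le: "card (Pow P) \<le> 2 ^ k"
  using finite_AP[OF assms] card_AP_le[OF assms] by (simp_all add: card_Pow power_increasing)

lemma
  assumes "k \<ge> 2"
  shows finite_marked_APs: "finite (marked_APs k k' n x)"
    and card_marked_APs_le: "card (marked_APs k k' n x) \<le> k * n * 2 ^ k"
proof -
  have bound: "finite {A. A \<subseteq> P - {x} \<and> card A = k'}
      \<and> card {A. A \<subseteq> P - {x} \<and> card A = k'} \<le> 2 ^ k"
    if "P \<in> APs_through k n x" for P
  proof -
    have "is_AP k P" using that by (simp add: APs_through_def)
    moreover have "{A. A \<subseteq> P - {x} \<and> card A = k'} \<subseteq> Pow P" by auto
    ultimately show ?thesis
      using finite_Pow_AP[of k P] card_Pow_AP_le[of k P] card_mono[of "Pow P"] finite_subset[of _ "Pow P"]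
      by (meson order_trans)
  qed
  show "finite (marked_APs k k' n x)"
    unfolding marked_APs_def by (rule finite_Sigma_bounded[OF finite_APs_through[OF assms] bound])
  show "card (marked_APs k k' n x) \<le> k * n * 2 ^ k"
    unfolding marked_APs_def
    using card_Sigma_le[OF finite_APs_through[OF assms] bound] card_APs_through_le[OF assms]
    by (meson le_trans mult_le_mono1)
qed

lemma
  assumes "k \<ge> 2"
  shows finite_AP_pairs: "finite (AP_pairs k k' n)"
    and card_AP_pairs_le: "card (AP_pairs k k' n) \<le> n * (k * n * 2 ^ k) ^ 2"
proof -
  have bound: "finite (marked_APs k k' n x \<times> marked_APs k k' n x)
      \<and> card (marked_APs k k' n x \<times> marked_APs k k' n x) \<le> (k * n * 2 ^ k) ^ 2" for x
    using finite_marked_APs[OF assms] card_marked_APs_le[OF assms]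
    by (simp add: card_cartesian_product power2_eq_square mult_le_mono)
  show "finite (AP_pairs k k' n)"
    unfolding AP_pairs_def by (rule finite_Sigma_bounded[OF finite_intv bound])
  show "card (AP_pairs k k' n) \<le> n * (k * n * 2 ^ k) ^ 2"
    unfolding AP_pairs_def using card_Sigma_le[OF finite_intv bound] by (simp only: card_intv)
qed

lemma marks_AP_pairs:
  assumes "i \<in> AP_pairs k k' n"
  shows "marks i \<subseteq> intv n" "card (marks i) \<le> 2 * k'"
proof -
  obtain x P A P' A' where i: "i = (x, (P, A), (P', A'))" by (cases i) auto
  with assms have "A \<subseteq> P" "A' \<subseteq> P'" "P \<subseteq> intv n" "P' \<subseteq> intv n" "card A = k'" "card A' = k'"
    by (auto simp: AP_pairs_def marked_APs_def APs_through_def)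
  then show "marks i \<subseteq> intv n" "card (marks i) \<le> 2 * k'"
    using card_Un_le[of A A'] by (auto simp: i marks_def)
qed

lemma sum_AP_count_sq_le:
  assumes "k \<ge> 2"
  shows "(\<Sum>x\<in>intv n. (real (AP_count k' k x S (intv n)))\<^sup>2)
    \<le> real (card {i\<in>AP_pairs k k' n. marks i \<subseteq> S})"
proof -
  define M where "M x = {(P, A)\<in>marked_APs k k' n x. A \<subseteq> S}" for x
  have finite_M: "finite (M x)" for x
    by (rule finite_subset[OF _ finite_marked_APs[OF assms]]) (auto simp: M_def)
  have "AP_count k' k x S (intv n) \<le> card (M x)" for x
  proof -
    have "{P. is_AP k P \<and> P \<subseteq> intv n \<and> x \<in> P \<and> k' \<le> card (P \<inter> (S - {x}))} \<subseteq> fst ` M x"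
    proof
      fix P assume P: "P \<in> {P. is_AP k P \<and> P \<subseteq> intv n \<and> x \<in> P \<and> k' \<le> card (P \<inter> (S - {x}))}"
      then have "k' \<le> card (P \<inter> (S - {x}))" by simp
      then obtain A where "A \<subseteq> P \<inter> (S - {x})" "card A = k'"
        by (rule obtain_subset_with_card_n)
      with P show "P \<in> fst ` M x"
        by (intro image_eqI[where x="(P, A)"]) (auto simp: M_def marked_APs_def APs_through_def)
    qed
    then show ?thesis
      unfolding AP_count_def by (rule surj_card_le[OF finite_M])
  qed
  then have "(\<Sum>x\<in>intv n. (real (AP_count k' k x S (intv n)))\<^sup>2)
      \<le> (\<Sum>x\<in>intv n. real (card (M x \<times> M x)))"
    by (intro sum_mono) (simp add: card_cartesian_product power2_eq_square mult_mono)
  also have "\<dots> = real (card (Sigma (intv n) (\<lambda>x. M x \<times> M x)))"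
    using finite_M by (simp add: finite_intv of_nat_sum)
  also have "Sigma (intv n) (\<lambda>x. M x \<times> M x) = {i\<in>AP_pairs k k' n. marks i \<subseteq> S}"
    by (auto simp: M_def AP_pairs_def marks_def)
  finally show ?thesis .
qed

lemma
  assumes "(P, A) \<in> marked_APs k k' n x"
  shows finite_meeting_marked_APs: "finite {(P', A')\<in>marked_APs k k' n x. A \<inter> A' \<noteq> {}}"
    and card_meeting_marked_APs_le:
      "card {(P', A')\<in>marked_APs k k' n x. A \<inter> A' \<noteq> {}} \<le> k' * (k * k) * 2 ^ k"
proof -
  define U where "U = (\<Union>y\<in>A. APs_through_both k x y)"
  have A: "A \<subseteq> P - {x}" "card A = k'" "finite A"
    using assms finite_AP by (auto simp: marked_APs_def APs_through_def intro: finite_subset)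
  have finite_U: "finite U"
    unfolding U_def by (intro finite_UN_I \<open>finite A\<close> finite_APs_through_both) (use A(1) in auto)
  have "card U \<le> (\<Sum>y\<in>A. card (APs_through_both k x y))"
    unfolding U_def by (rule card_UN_le[OF \<open>finite A\<close>])
  also have "\<dots> \<le> k' * (k * k)"
  proof -
    have "card (APs_through_both k x y) \<le> k * k" if "y \<in> A" for y
      using A(1) that by (intro card_APs_through_both_le) auto
    then show ?thesis
      using A(2) sum_bounded_above[of A "\<lambda>y. card (APs_through_both k x y)" "k * k"] by simp
  qed
  finally have card_U: "card U \<le> k' * (k * k)" .
  have subset: "{(P', A')\<in>marked_APs k k' n x. A \<inter> A' \<noteq> {}} \<subseteq> Sigma U Pow"
    by (auto simp: marked_APs_def APs_through_def APs_through_both_def U_def)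
  have bound: "finite (Pow P') \<and> card (Pow P') \<le> 2 ^ k" if "P' \<in> U" for P'
    using that finite_Pow_AP card_Pow_AP_le by (auto simp: U_def APs_through_both_def)
  show "finite {(P', A')\<in>marked_APs k k' n x. A \<inter> A' \<noteq> {}}"
    using finite_subset[OF subset finite_Sigma_bounded[OF finite_U bound]] .
  then show "card {(P', A')\<in>marked_APs k k' n x. A \<inter> A' \<noteq> {}} \<le> k' * (k * k) * 2 ^ k"
    using card_mono[OF finite_Sigma_bounded[OF finite_U bound] subset] card_Sigma_le[OF finite_U bound] card_U
    by (meson le_trans mult_le_mono1)
qed

lemma card_overlapping_AP_pairs_le:
  assumes "k \<ge> 2"
  shows "card {(x, (P, A), (P', A'))\<in>AP_pairs k k' n. A \<inter> A' \<noteq> {}}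
    \<le> n * (k * n * 2 ^ k) * (k' * (k * k) * 2 ^ k)"
proof -
  let ?meeting = "\<lambda>x (P, A). {(P', A')\<in>marked_APs k k' n x. A \<inter> A' \<noteq> {}}"
  have overlapping_eq: "{(x, (P, A), (P', A'))\<in>AP_pairs k k' n. A \<inter> A' \<noteq> {}}
      = Sigma (intv n) (\<lambda>x. Sigma (marked_APs k k' n x) (?meeting x))"
    by (auto simp: AP_pairs_def)
  have bound: "finite (Sigma (marked_APs k k' n x) (?meeting x))
      \<and> card (Sigma (marked_APs k k' n x) (?meeting x)) \<le> (k * n * 2 ^ k) * (k' * (k * k) * 2 ^ k)" for x
  proof -
    have meeting: "finite (?meeting x a) \<and> card (?meeting x a) \<le> k' * (k * k) * 2 ^ k"
      if "a \<in> marked_APs k k' n x" for a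
      using that finite_meeting_marked_APs card_meeting_marked_APs_le by (cases a) auto
    show ?thesis
      using finite_Sigma_bounded[OF finite_marked_APs[OF assms] meeting]
        card_Sigma_le[OF finite_marked_APs[OF assms] meeting] card_marked_APs_le[OF assms, of k' n x]
      by (meson le_trans mult_le_mono1)
  qed
  show ?thesis
    unfolding overlapping_eq using card_Sigma_le[OF finite_intv bound] by (simp only: card_intv mult.assoc)
qed

lemma sum_AP_pairs_power_le:
  assumes "k \<ge> 2" "0 \<le> p" "p \<le> 1"
  shows "(\<Sum>i\<in>AP_pairs k k' n. p ^ card (marks i))
    \<le> real (n * (k * n * 2 ^ k) ^ 2) * p ^ (2 * k') + real (n * (k * n * 2 ^ k) * (k' * (k * k) * 2 ^ k)) * p ^ k'"
proof -
  let ?I = "AP_pairs k k' n"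
  let ?O = "{(x, (P, A), (P', A'))\<in>AP_pairs k k' n. A \<inter> A' \<noteq> {}}"
  have term_le: "p ^ card (marks i) \<le> p ^ (2 * k') + (if i \<in> ?O then p ^ k' else 0)" if "i \<in> ?I" for i
  proof -
    obtain x P A P' A' where i: "i = (x, (P, A), (P', A'))" by (cases i) auto
    with that have "A \<subseteq> P" "A' \<subseteq> P'" "is_AP k P" "is_AP k P'" "card A = k'" "card A' = k'"
      by (auto simp: AP_pairs_def marked_APs_def APs_through_def)
    then have A: "finite A" "finite A'" "card A = k'" "card A' = k'"
      using finite_AP finite_subset by blast+
    show ?thesis
    proof (cases "A \<inter> A' = {}")
      case True
      then show ?thesis using A by (simp add: i marks_def card_Un_disjoint mult_2)
    next
      case False
      have "k' \<le> card (marks i)" using A card_mono[of "A \<union> A'" A] by (simp add: i marks_def)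
      then have "p ^ card (marks i) \<le> p ^ k'" using assms by (intro power_decreasing) auto
      then show ?thesis using False that assms(2) by (simp add: i add_increasing)
    qed
  qed
  have "(\<Sum>i\<in>?I. p ^ card (marks i)) \<le> (\<Sum>i\<in>?I. p ^ (2 * k') + (if i \<in> ?O then p ^ k' else 0))"
    by (rule sum_mono[OF term_le])
  also have "\<dots> = real (card ?I) * p ^ (2 * k') + real (card ?O) * p ^ k'"
  proof -
    have "?I \<inter> ?O = ?O" by auto
    then show ?thesis using finite_AP_pairs[OF assms(1)] by (simp add: sum.distrib sum.If_cases)
  qed
  also have "\<dots> \<le> real (n * (k * n * 2 ^ k) ^ 2) * p ^ (2 * k')
      + real (n * (k * n * 2 ^ k) * (k' * (k * k) * 2 ^ k)) * p ^ k'"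
    using card_AP_pairs_le[OF assms(1), of k' n] card_overlapping_AP_pairs_le[OF assms(1), of k' n] assms(2)
    by (intro add_mono mult_right_mono) (simp_all only: of_nat_le_iff zero_le_power)
  finally show ?thesis .
qed

lemma sum_AP_pairs_power_le_sq:
  assumes "k \<ge> 2" "0 \<le> p" "p \<le> 1" "1 \<le> real n * p ^ k'"
  shows "(\<Sum>i\<in>AP_pairs k k' n. p ^ card (marks i))
    \<le> real ((k * 2 ^ k)\<^sup>2 * (1 + k * k')) * real n * (real n * p ^ k')\<^sup>2"
proof -
  let ?\<mu> = "real n * p ^ k'"
  have "(\<Sum>i\<in>AP_pairs k k' n. p ^ card (marks i))
      \<le> real ((k * 2 ^ k)\<^sup>2) * real n * ?\<mu>\<^sup>2 + real ((k * 2 ^ k)\<^sup>2 * k * k') * real n * ?\<mu>"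
    using sum_AP_pairs_power_le[OF assms(1-3), of k' n]
    by (simp add: power2_eq_square power_mult power_mult_distrib algebra_simps)
  also have "\<dots>
      \<le> real ((k * 2 ^ k)\<^sup>2) * real n * ?\<mu>\<^sup>2 + real ((k * 2 ^ k)\<^sup>2 * k * k') * real n * ?\<mu>\<^sup>2"
  proof -
    have "?\<mu> * 1 \<le> ?\<mu> * ?\<mu>" using assms(4) by (intro mult_left_mono) simp_all
    then show ?thesis by (intro add_left_mono mult_left_mono) (simp_all add: power2_eq_square)
  qed
  finally show ?thesis by (simp add: algebra_simps)
qed

section \<open>Robust second moments\<close>

definition AP_moment_robust ::
    "nat \<Rightarrow> nat \<Rightarrow> nat \<Rightarrow> nat \<Rightarrow> real \<Rightarrow> real \<Rightarrow> int set set" where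
  "AP_moment_robust k' k n m r L = {S. S \<subseteq> intv n \<and> card S = m \<and>
     \<not> (\<exists>X\<subseteq>S. real (card X) \<le> r \<and>
          (1 / real n) * (\<Sum>x\<in>intv n. (real (AP_count k' k x (S - X) (intv n)))\<^sup>2) \<le> L)}"

lemma finite_AP_moment_robust: "finite (AP_moment_robust k' k n m r L)"
  by (rule finite_subset[of _ "Pow (intv n)"]) (auto simp: AP_moment_robust_def finite_intv)

lemma AP_moment_robust_antimono:
  "r \<le> r' \<Longrightarrow> AP_moment_robust k' k n m r' L \<subseteq> AP_moment_robust k' k n m r L"
  by (auto simp: AP_moment_robust_def)

lemma card_AP_moment_robust_le:
  assumes "k \<ge> 2" "0 < n" "0 < L"
    and "(\<Sum>i\<in>AP_pairs k k' n. (real m / real n) ^ card (marks i)) \<le> \<gamma> * (real n * L)"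
  shows "real (card (AP_moment_robust k' k n m (real (2 * k' * q)) L)) \<le> \<gamma> ^ q * real (n choose m)"
proof -
  let ?robust = "{S. S \<subseteq> intv n \<and> card S = m \<and>
      (\<forall>X\<subseteq>S. card X \<le> 2 * k' * q \<longrightarrow>
        real n * L < real (card {i\<in>AP_pairs k k' n. marks i \<subseteq> S - X}))}"
  have "AP_moment_robust k' k n m (real (2 * k' * q)) L \<subseteq> ?robust"
  proof
    fix S assume S: "S \<in> AP_moment_robust k' k n m (real (2 * k' * q)) L"
    have "real n * L < real (card {i\<in>AP_pairs k k' n. marks i \<subseteq> S - X})"
      if "X \<subseteq> S" "card X \<le> 2 * k' * q" for X
    proof -
      have "real (card X) \<le> real (2 * k' * q)" using that(2) by (simp only: of_nat_le_iff)
      then have "\<not> (1 / real n) * (\<Sum>x\<in>intv n. (real (AP_count k' k x (S - X) (intv n)))\<^sup>2) \<le> L"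
        using S that(1) unfolding AP_moment_robust_def by blast
      then have "real n * L < (\<Sum>x\<in>intv n. (real (AP_count k' k x (S - X) (intv n)))\<^sup>2)"
        using assms(2) by (simp add: not_le pos_less_divide_eq mult.commute)
      also have "\<dots> \<le> real (card {i\<in>AP_pairs k k' n. marks i \<subseteq> S - X})"
        by (rule sum_AP_count_sq_le[OF assms(1)])
      finally show ?thesis .
    qed
    with S show "S \<in> ?robust" by (auto simp: AP_moment_robust_def)
  qed
  have "0 < real n * L" using assms(2,3) by simp
  have "real (card (AP_moment_robust k' k n m (real (2 * k' * q)) L)) * (real n * L) ^ q
      \<le> real (card ?robust) * (real n * L) ^ q"
    using \<open>_ \<subseteq> ?robust\<close> \<open>0 < real n * L\<close>
    by (intro mult_right_mono) (simp_all add: card_mono finite_intv)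
  also have "\<dots> \<le> real (n choose m) * (\<Sum>i\<in>AP_pairs k k' n. (real m / real n) ^ card (marks i)) ^ q"
    using deletion_method[OF finite_intv finite_AP_pairs[OF assms(1)] _ less_imp_le[OF \<open>0 < real n * L\<close>],
        where e = marks and h = "2 * k'" and m = m and q = q]
      marks_AP_pairs by (simp add: card_intv)
  also have "\<dots> \<le> real (n choose m) * (\<gamma> * (real n * L)) ^ q"
    using assms(4) by (intro mult_left_mono power_mono) (simp_all add: sum_nonneg)
  also have "\<dots> = \<gamma> ^ q * real (n choose m) * (real n * L) ^ q"
    by (simp add: power_mult_distrib)
  finally show ?thesis
    by (rule mult_right_le_imp_le) (simp add: \<open>0 < real n * L\<close>)
qed

lemma
  assumes "2 \<le> k" "k' < k" "1 \<le> n" "1 \<le> C" and m: "C * real n powr (1 - 1 / (real k - 1)) \<le> real m"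
  shows le_of_powr_lower_bound: "C \<le> real m"
    and one_le_expected_AP_count: "1 \<le> real n * (real m / real n) ^ k'"
proof -
  define r where "r = 1 / (real k - 1)"
  have "0 < r" "real k' * r \<le> 1"
    using assms(1,2) by (auto simp: r_def divide_simps)
  have "1 \<le> real n powr (1 - r)"
    using \<open>1 \<le> n\<close> \<open>0 < r\<close> unfolding r_def by (simp add: ge_one_powr_ge_zero)
  then have "C * 1 \<le> real m" "1 * real n powr (1 - r) \<le> real m"
    using \<open>1 \<le> C\<close> m unfolding r_def by (meson order_trans mult_left_mono mult_right_mono zero_le_one)+
  then show "C \<le> real m" by simp
  have "real n powr (- r) = real n powr (1 - r) / real n"
    using assms(3) by (simp add: powr_diff powr_minus_divide)
  also have "\<dots> \<le> real m / real n"
    using \<open>1 * real n powr (1 - r) \<le> real m\<close> by (simp add: divide_right_mono)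
  finally have "(real n powr (- r)) ^ k' \<le> (real m / real n) ^ k'"
    by (intro power_mono) auto
  moreover have "(real n powr (- r)) ^ k' = real n powr (- (real k' * r))"
    using assms(3) by (simp add: powr_power)
  moreover have "real n powr (- 1) \<le> real n powr (- (real k' * r))"
    using assms(3) \<open>real k' * r \<le> 1\<close> by (intro powr_mono) auto
  ultimately have "1 / real n \<le> (real m / real n) ^ k'"
    using assms(3) by (simp add: powr_minus_divide)
  then show "1 \<le> real n * (real m / real n) ^ k'"
    using assms(3) by (simp add: divide_simps mult.commute)
qed

lemma card_AP_moment_robust_le_power:
  fixes \<beta> \<xi> :: real and a :: nat
  assumes "2 \<le> k" "0 < \<beta>" "\<beta> \<le> 1" "0 \<le> \<xi>" "1 \<le> a"
    and "real (2 * k') \<le> \<xi> * real a" "2 * a \<le> m"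
    and \<mu>: "1 \<le> real n * (real m / real n) ^ k'"
  defines "L \<equiv> real ((k * 2 ^ k)\<^sup>2 * (1 + k * k')) / \<beta> ^ (2 * a)
    * (real n * (real m / real n) ^ k')\<^sup>2"
  shows "real (card (AP_moment_robust k' k n m (\<xi> * real m) L)) \<le> \<beta> ^ m * real (n choose m)"
proof (cases "m \<le> n")
  case False
  then have "AP_moment_robust k' k n m (\<xi> * real m) L = {}"
    by (auto simp: AP_moment_robust_def card_intv dest: card_mono[OF finite_intv])
  then show ?thesis using assms(2) by simp
next
  case True
  define q where "q = m div a"
  have "0 < n" using \<mu> by (cases n) auto
  have "0 < real ((k * 2 ^ k)\<^sup>2 * (1 + k * k'))" using assms(1) by (simp only: of_nat_0_less_iff) simp
  moreover have "0 < (real n * (real m / real n) ^ k')\<^sup>2" using \<mu> by (intro zero_less_power) linarith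
  ultimately have "0 < L"
    unfolding L_def using assms(2) by (intro mult_pos_pos divide_pos_pos) (assumption | simp)+
  have "0 < q" using assms(5,7) by (simp add: q_def div_greater_zero_iff)
  then have "m = a * q + m mod a" "m mod a < a" "a \<le> a * q"
    using assms(5) by (simp_all add: q_def)
  then have "a * q \<le> m" "m \<le> 2 * a * q" by linarith+
  have "(\<Sum>i\<in>AP_pairs k k' n. (real m / real n) ^ card (marks i)) \<le> \<beta> ^ (2 * a) * (real n * L)"
    using sum_AP_pairs_power_le_sq[OF assms(1) _ _ \<mu>] True \<open>0 < n\<close> assms(2) by (simp add: L_def ac_simps)
  then have "real (card (AP_moment_robust k' k n m (real (2 * k' * q)) L)) \<le> (\<beta> ^ (2 * a)) ^ q * real (n choose m)"
    by (rule card_AP_moment_robust_le[OF assms(1) \<open>0 < n\<close> \<open>0 < L\<close>])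
  also have "\<dots> \<le> \<beta> ^ m * real (n choose m)"
    unfolding power_mult[symmetric] using assms(2,3) \<open>m \<le> 2 * a * q\<close>
    by (intro mult_right_mono power_decreasing) simp_all
  finally have "real (card (AP_moment_robust k' k n m (real (2 * k' * q)) L)) \<le> \<beta> ^ m * real (n choose m)" .
  moreover have "real (2 * k' * q) \<le> \<xi> * real m"
  proof -
    have "real (2 * k' * q) \<le> \<xi> * real a * real q"
      using assms(6) by (simp add: mult_right_mono)
    also have "\<dots> \<le> \<xi> * real m"
      using \<open>a * q \<le> m\<close> assms(4) by (simp add: mult.assoc mult_left_mono flip: of_nat_mult)
    finally show ?thesis .
  qed
  ultimately show ?thesis
    using card_mono[OF finite_AP_moment_robust AP_moment_robust_antimono]
    by (meson of_nat_le_iff order_trans)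
qed

theorem lemma4:
  fixes k' k :: nat and \<beta> \<xi> :: real
  assumes "1 \<le> k'" and "k' < k" and "\<beta> > 0" and "\<xi> > 0"
  shows "\<exists>C T :: real. C > 0 \<and> T > 0 \<and>
    (\<exists>N. \<forall>n \<ge> N. \<forall>m :: nat. real m \<ge> C * real n powr (1 - 1 / (real k - 1)) \<longrightarrow>
      real (card {S. S \<subseteq> intv n \<and> card S = m \<and>
        \<not> (\<exists>X \<subseteq> S. real (card X) \<le> \<xi> * real m \<and>
             (1 / real n) * (\<Sum>x\<in>intv n. (real (AP_count k' k x (S - X) (intv n)))\<^sup>2)
               \<le> T * (real n * (real m / real n) ^ k')\<^sup>2)})
      \<le> \<beta> ^ m * real (n choose m))"
proof -
  have "2 \<le> k" using assms(1,2) by simp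
  define a :: nat where "a = nat \<lceil>real (2 * k') / \<xi>\<rceil> + 1"
  define \<beta>' where "\<beta>' = min \<beta> 1"
  define T where "T = real ((k * 2 ^ k)\<^sup>2 * (1 + k * k')) / \<beta>' ^ (2 * a)"
  define C where "C = max 1 (real (2 * a))"
  have "real (2 * k') / \<xi> \<le> real a" unfolding a_def by linarith
  then have "real (2 * k') \<le> \<xi> * real a" using assms(4) by (simp add: divide_le_eq mult.commute)
  have "0 < \<beta>'" "\<beta>' \<le> 1" "\<beta>' \<le> \<beta>" using assms(3) by (simp_all add: \<beta>'_def)
  then have "0 < T"
    unfolding T_def using \<open>2 \<le> k\<close>
    by (intro divide_pos_pos zero_less_power) (simp_all only: of_nat_0_less_iff, simp_all)
  have bound: "real (card (AP_moment_robust k' k n m (\<xi> * real m) (T * (real n * (real m / real n) ^ k')\<^sup>2)))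
      \<le> \<beta> ^ m * real (n choose m)"
    if "1 \<le> n" "C * real n powr (1 - 1 / (real k - 1)) \<le> real m" for n m
  proof -
    have "1 \<le> C" by (simp add: C_def)
    note bounds = \<open>2 \<le> k\<close> assms(2) that(1) this that(2)
    have "C \<le> real m" "1 \<le> real n * (real m / real n) ^ k'"
      by (rule le_of_powr_lower_bound[OF bounds], rule one_le_expected_AP_count[OF bounds])
    then have "2 * a \<le> m" by (simp add: C_def)
    then have "real (card (AP_moment_robust k' k n m (\<xi> * real m) (T * (real n * (real m / real n) ^ k')\<^sup>2)))
        \<le> \<beta>' ^ m * real (n choose m)"
      unfolding T_def using \<open>2 \<le> k\<close> \<open>0 < \<beta>'\<close> \<open>\<beta>' \<le> 1\<close> assms(4) \<open>real (2 * k') \<le> \<xi> * real a\<close>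
        \<open>1 \<le> real n * (real m / real n) ^ k'\<close>
      by (intro card_AP_moment_robust_le_power) (simp_all add: a_def)
    also have "\<dots> \<le> \<beta> ^ m * real (n choose m)"
      using \<open>0 < \<beta>'\<close> \<open>\<beta>' \<le> \<beta>\<close> by (intro mult_right_mono power_mono) simp_all
    finally show ?thesis .
  qed
  show ?thesis
    by (rule exI[of _ C], rule exI[of _ T])
      (use \<open>0 < T\<close> bound in \<open>auto simp: C_def AP_moment_robust_def intro!: exI[of _ 1]\<close>)
qed

end
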